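(* Let $k=2r$ with $r\geq2$ and $G=BS(1,k)$. Let $c_0(n)$ be the number of conjugacy classes of $G$ contained in the subgroup $\mathbb{Z}[1/k]$ whose length with respect to $\{a,t\}$ is $n$. Then the growth rate $\limsup_n c_0(n)^{1/n}$ of these conjugacy classes lies in the open interval $(\frac{4}{3},2)$.
   Context: $BS(1,k)=\langle a,t\mid tat^{-1}=a^k\rangle\cong \mathbb{Z}[1/k]\rtimes\mathbb{Z}$ via $a\mapsto(1,0)$, $t\mapsto(0,1)$, with the generator of $\mathbb{Z}$ acting by multiplication by $k$; $\mathbb{Z}[1/k]=\{(x,0)\}$ is a normal subgroup. The length of a conjugacy class is the minimal word length of its elements. The growth rate is the reciprocal of the radius of convergence of $\sum c_0(n)z^n$. *)

theory Defs
  imports "HOL-Analysis.Analysis"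
begin

text \<open>Concrete model of BS(1,k) = Z[1/k] \<rtimes> Z: elements are pairs (x, m) with
  x in Z[1/k] (as rationals) and m an integer; (x,m)(y,n) = (x + k^m y, m + n).
  Then a = (1,0), t = (0,1).\<close>

definition Zk :: "nat \<Rightarrow> rat set" where
  "Zk k = {of_int a / (of_nat k) ^ j | a j. True}"

definition BS :: "nat \<Rightarrow> (rat \<times> int) set" where
  "BS k = Zk k \<times> (UNIV :: int set)"

definition bs_mult :: "nat \<Rightarrow> rat \<times> int \<Rightarrow> rat \<times> int \<Rightarrow> rat \<times> int" where
  "bs_mult k g h = (fst g + (of_nat k) powi (snd g) * fst h, snd g + snd h)"

definition bs_inv :: "nat \<Rightarrow> rat \<times> int \<Rightarrow> rat \<times> int" where
  "bs_inv k g = (- ((of_nat k) powi (- snd g)) * fst g, - snd g)"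

definition bs_gens :: "(rat \<times> int) set" where
  "bs_gens = {(1,0), (-1,0), (0,1), (0,-1)}"

definition bs_eval :: "nat \<Rightarrow> (rat \<times> int) list \<Rightarrow> rat \<times> int" where
  "bs_eval k w = foldr (bs_mult k) w (0,0)"

definition word_length :: "nat \<Rightarrow> rat \<times> int \<Rightarrow> nat" where
  "word_length k g = (LEAST n. \<exists>w. set w \<subseteq> bs_gens \<and> length w = n \<and> bs_eval k w = g)"

definition conj_class :: "nat \<Rightarrow> rat \<times> int \<Rightarrow> (rat \<times> int) set" where
  "conj_class k g = {bs_mult k (bs_mult k h g) (bs_inv k h) | h. h \<in> BS k}"

definition class_length :: "nat \<Rightarrow> (rat \<times> int) set \<Rightarrow> nat" where
  "class_length k C = (LEAST n. \<exists>g\<in>C. word_length k g = n)"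

definition c0 :: "nat \<Rightarrow> nat \<Rightarrow> nat" where
  "c0 k n = card {C. (\<exists>x\<in>Zk k. C = conj_class k (x, 0)) \<and> class_length k C = n}"

end

theory Submission
  imports Defs
begin

(* The classes in Z[1/k] are the orbits of x under multiplication by powers of k, so every such
   class contains integers, and integers not divisible by k lie in distinct classes.

   Upper bound: read a word from left to right as a walk of a cursor (the t-exponent) over a tape
   of signed base-k digits, a^(+-1) adding +-1 at the cursor and t^(+-1) moving it. A class of
   length n thereby contains an integer sum_j d_j k^j whose cost sum_j (|d_j| + 2) is at most
   n + 2. Digit strings of cost c number at most (19/10)^c, because 19/10 exceeds the real root
   1.839... of q^3 = q^2 + q + 1 that governs their counting recursion.

   Lower bound: the integers 1 + k * sum_(j<m) e_j k^j with e_j in {-1, 0, 1} have cost at most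
   3m + 3 and, for k >= 3, lie in 3^m distinct classes. So the partial sums of c0 grow at least like 3^(n/3),
   and 3^(1/3) > 7/5. *)

lemma bs_mult_assoc:
  assumes "k > 0"
  shows "bs_mult k (bs_mult k g h) f = bs_mult k g (bs_mult k h f)"
  using assms by (simp add: bs_mult_def power_int_add algebra_simps)

lemma bs_mult_zero_left [simp]: "bs_mult k (0, 0) g = g"
  by (simp add: bs_mult_def)

lemma bs_mult_zero_right [simp]: "bs_mult k g (0, 0) = g"
  by (simp add: bs_mult_def)

lemma bs_eval_Nil [simp]: "bs_eval k [] = (0, 0)"
  by (simp add: bs_eval_def)

lemma bs_eval_Cons [simp]: "bs_eval k (g # w) = bs_mult k g (bs_eval k w)"
  by (simp add: bs_eval_def)

lemma bs_eval_append:
  assumes "k > 0"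
  shows "bs_eval k (u @ v) = bs_mult k (bs_eval k u) (bs_eval k v)"
  by (induction u) (simp_all add: bs_mult_assoc[OF assms])

lemma bs_eval_snoc:
  assumes "k > 0"
  shows "bs_eval k (w @ [g]) = bs_mult k (bs_eval k w) g"
  by (simp add: bs_eval_append[OF assms])

definition a_word :: "int \<Rightarrow> (rat \<times> int) list" where
  "a_word e = replicate (nat \<bar>e\<bar>) (of_int (sgn e), 0)"

definition t_word :: "int \<Rightarrow> (rat \<times> int) list" where
  "t_word p = replicate (nat p) (0, 1) @ replicate (nat (- p)) (0, - 1)"

lemma set_a_word: "set (a_word e) \<subseteq> bs_gens"
  by (auto simp: a_word_def bs_gens_def sgn_if)

lemma set_t_word: "set (t_word p) \<subseteq> bs_gens"
  by (auto simp: t_word_def bs_gens_def)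

lemma length_a_word [simp]: "length (a_word e) = nat \<bar>e\<bar>"
  by (simp add: a_word_def)

lemma bs_eval_a_word [simp]: "bs_eval k (a_word e) = (of_int e, 0)"
proof -
  have "bs_eval k (replicate n (s, 0)) = (of_nat n * s, 0)" for n s
    by (induction n) (simp_all add: bs_mult_def algebra_simps)
  moreover have "of_nat (nat \<bar>e\<bar>) * of_int (sgn e) = (of_int e :: rat)"
    by (simp add: sgn_if)
  ultimately show ?thesis
    by (simp add: a_word_def)
qed

lemma bs_eval_t_word [simp]:
  assumes "k > 0"
  shows "bs_eval k (t_word p) = (0, p)"
proof -
  have "bs_eval k (replicate n (0, s)) = (0, of_nat n * s)" for n s
    by (induction n) (simp_all add: bs_mult_def algebra_simps)
  then show ?thesis
    by (simp add: t_word_def bs_eval_append[OF assms] bs_mult_def)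
qed

lemma int_in_Zk: "of_int a \<in> Zk k"
  unfolding Zk_def by (rule CollectI, rule exI[of _ a], rule exI[of _ 0]) simp

lemma conj_class_eq:
  assumes "k > 0"
  shows "conj_class k (x, 0) = (\<lambda>m. (of_nat k powi m * x, 0)) ` UNIV"
proof -
  have conj: "bs_mult k (bs_mult k h (x, 0)) (bs_inv k h) = (of_nat k powi snd h * x, 0)" for h
    using assms by (cases h) (simp add: bs_mult_def bs_inv_def power_int_minus field_simps)
  have "(0, m) \<in> BS k" for m
    using int_in_Zk[of 0 k] by (simp add: BS_def)
  then show ?thesis
    unfolding conj_class_def conj by force
qed

lemma self_in_conj_class:
  assumes "k > 0"
  shows "(x, 0) \<in> conj_class k (x, 0)"
  unfolding conj_class_eq[OF assms] by (rule image_eqI[of _ _ 0]) simp_all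

lemma conj_class_eq_if_mem:
  assumes "k > 0" and "(y, 0) \<in> conj_class k (x, 0)"
  shows "conj_class k (y, 0) = conj_class k (x, 0)"
proof -
  obtain m where y: "y = of_nat k powi m * x"
    using assms by (auto simp: conj_class_eq)
  have "(of_nat k :: rat) powi p * of_nat k powi m = of_nat k powi (p + m)" for p
    using assms by (simp add: power_int_add)
  then have shift: "(\<lambda>p. (of_nat k powi p * y, 0 :: int)) = (\<lambda>p. (of_nat k powi p * x, 0)) \<circ> (\<lambda>p. p + m)"
    by (auto simp: y mult.assoc[symmetric])
  have "range (\<lambda>p. p + m) = UNIV"
    by (metis surj_def diff_add_cancel)
  then show ?thesis
    unfolding conj_class_eq[OF assms(1)] shift image_comp[symmetric] by simp
qed

lemma exists_word_conj_class:
  assumes "k > 0" and "x \<in> Zk k" and "g \<in> conj_class k (x, 0)"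
  shows "\<exists>w. set w \<subseteq> bs_gens \<and> bs_eval k w = g"
proof -
  obtain a j where x: "x = of_int a / of_nat k ^ j"
    using assms(2) by (auto simp: Zk_def)
  obtain m where g: "g = (of_nat k powi m * x, 0)"
    using assms(1,3) by (auto simp: conj_class_eq)
  define p where "p = m - int j"
  have "g = (of_nat k powi p * of_int a, 0)"
    using assms(1) by (simp add: g x p_def power_int_diff field_simps)
  also have "\<dots> = bs_eval k (t_word p @ a_word a @ t_word (- p))"
    using assms(1) by (simp add: bs_eval_append bs_mult_def)
  finally show ?thesis
    using set_t_word set_a_word by (metis le_sup_iff set_append)
qed

lemma word_length_le:
  assumes "set w \<subseteq> bs_gens"
  shows "word_length k (bs_eval k w) \<le> length w"
  unfolding word_length_def using assms by (blast intro: Least_le)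

lemma exists_shortest_word:
  assumes "set w \<subseteq> bs_gens" and "bs_eval k w = g"
  shows "\<exists>v. set v \<subseteq> bs_gens \<and> length v = word_length k g \<and> bs_eval k v = g"
proof -
  have "\<exists>n v. set v \<subseteq> bs_gens \<and> length v = n \<and> bs_eval k v = g"
    using assms by blast
  then show ?thesis
    unfolding word_length_def by (rule LeastI_ex)
qed

lemma class_length_le:
  assumes "g \<in> C"
  shows "class_length k C \<le> word_length k g"
  unfolding class_length_def using assms by (blast intro: Least_le)

lemma class_length_attained:
  assumes "g \<in> C"
  shows "\<exists>h\<in>C. word_length k h = class_length k C"
  unfolding class_length_def by (rule LeastI_ex) (use assms in blast)

subsection \<open>Signed base-k digit strings\<close>

fun digits_value :: "nat \<Rightarrow> int list \<Rightarrow> int" where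
  "digits_value k [] = 0"
| "digits_value k (d # ds) = d + int k * digits_value k ds"

fun digits_cost :: "int list \<Rightarrow> nat" where
  "digits_cost [] = 0"
| "digits_cost (d # ds) = nat \<bar>d\<bar> + 2 + digits_cost ds"

lemma digits_value_append:
  "digits_value k (ds @ es) = digits_value k ds + int k ^ length ds * digits_value k es"
  by (induction ds) (simp_all add: algebra_simps)

lemma digits_cost_append: "digits_cost (ds @ es) = digits_cost ds + digits_cost es"
  by (induction ds) simp_all

lemma digits_value_update:
  "i < length ds \<Longrightarrow> digits_value k (ds[i := ds ! i + s]) = digits_value k ds + s * int k ^ i"
  by (induction ds arbitrary: i) (auto simp: algebra_simps split: nat.split)

lemma digits_cost_update_le: "digits_cost (ds[i := ds ! i + s]) \<le> digits_cost ds + nat \<bar>s\<bar>"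
  by (induction ds arbitrary: i) (auto split: nat.split)

fun horner_word :: "int list \<Rightarrow> (rat \<times> int) list" where
  "horner_word [] = []"
| "horner_word (d # ds) = a_word d @ (0, 1) # horner_word ds @ [(0, - 1)]"

lemma set_horner_word: "set (horner_word ds) \<subseteq> bs_gens"
  by (induction ds) (use set_a_word in \<open>auto simp: bs_gens_def\<close>)

lemma length_horner_word: "length (horner_word ds) = digits_cost ds"
  by (induction ds) simp_all

lemma bs_eval_horner_word:
  assumes "k > 0"
  shows "bs_eval k (horner_word ds) = (of_int (digits_value k ds), 0)"
  by (induction ds) (simp_all add: bs_eval_append[OF assms] bs_mult_def)

subsection \<open>Reading a word as a walk on a digit tape\<close>

(* The digits ds occupy the tape positions -lo..hi, a window containing both 0 and the cursor h.
   Each cell of the window costs 2, and a walk from 0 that has visited -lo and hi and stands at h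
   has made at least 2 (lo + hi) - |h| steps, hence the slack |h|. *)
definition tape_invariant :: "nat \<Rightarrow> nat \<Rightarrow> rat \<Rightarrow> int \<Rightarrow> bool" where
  "tape_invariant k n x h \<longleftrightarrow> (\<exists>lo hi ds. length ds = lo + hi + 1 \<and> - int lo \<le> h \<and> h \<le> int hi \<and>
     x * of_nat k ^ lo = of_int (digits_value k ds) \<and> digits_cost ds \<le> n + nat \<bar>h\<bar> + 2)"

lemma tape_invariant_Nil: "tape_invariant k 0 0 0"
  unfolding tape_invariant_def by (rule exI[of _ 0], rule exI[of _ 0], rule exI[of _ "[0]"]) simp

lemma tape_invariant_a:
  assumes "k > 0" and "tape_invariant k n x h" and "\<bar>s\<bar> = 1"
  shows "tape_invariant k (Suc n) (x + of_nat k powi h * of_int s) h"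
proof -
  obtain lo hi ds where len: "length ds = lo + hi + 1" and h: "- int lo \<le> h" "h \<le> int hi"
    and val: "x * of_nat k ^ lo = of_int (digits_value k ds)" and cost: "digits_cost ds \<le> n + nat \<bar>h\<bar> + 2"
    using assms(2) unfolding tape_invariant_def by blast
  define i where "i = nat (h + int lo)"
  have i: "i < length ds"
    using h len by (simp add: i_def)
  have "(of_nat k :: rat) powi h * of_nat k ^ lo = of_nat k powi (h + int lo)"
    using assms(1) by (simp add: power_int_add)
  also have "\<dots> = of_nat k ^ i"
    using h(1) by (simp add: i_def flip: power_int_of_nat)
  finally have "(x + of_nat k powi h * of_int s) * of_nat k ^ lo = of_int (digits_value k (ds[i := ds ! i + s]))"
    unfolding digits_value_update[OF i] using val by (simp add: algebra_simps)
  moreover have "digits_cost (ds[i := ds ! i + s]) \<le> Suc n + nat \<bar>h\<bar> + 2"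
    using digits_cost_update_le[of ds i s] cost assms(3) by simp
  ultimately show ?thesis
    unfolding tape_invariant_def using len h
    by (intro exI[of _ lo] exI[of _ hi] exI[of _ "ds[i := ds ! i + s]"]) simp
qed

lemma tape_invariant_t:
  assumes "tape_invariant k n x h"
  shows "tape_invariant k (Suc n) x (h + 1)"
proof -
  obtain lo hi ds where len: "length ds = lo + hi + 1" and h: "- int lo \<le> h" "h \<le> int hi"
    and val: "x * of_nat k ^ lo = of_int (digits_value k ds)" and cost: "digits_cost ds \<le> n + nat \<bar>h\<bar> + 2"
    using assms unfolding tape_invariant_def by blast
  show ?thesis
  proof (cases "h = int hi")
    case True
    have "length (ds @ [0]) = lo + Suc hi + 1" and "digits_cost (ds @ [0]) \<le> Suc n + nat \<bar>h + 1\<bar> + 2"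
      using len cost True by (simp_all add: digits_cost_append)
    moreover have "x * of_nat k ^ lo = of_int (digits_value k (ds @ [0]))"
      using val by (simp add: digits_value_append)
    ultimately show ?thesis
      unfolding tape_invariant_def using h True
      by (intro exI[of _ lo] exI[of _ "Suc hi"] exI[of _ "ds @ [0]"]) simp
  next
    case False
    then show ?thesis
      unfolding tape_invariant_def using len h val cost by (intro exI[of _ lo] exI[of _ hi] exI[of _ ds]) auto
  qed
qed

lemma tape_invariant_t_inv:
  assumes "tape_invariant k n x h"
  shows "tape_invariant k (Suc n) x (h - 1)"
proof -
  obtain lo hi ds where len: "length ds = lo + hi + 1" and h: "- int lo \<le> h" "h \<le> int hi"
    and val: "x * of_nat k ^ lo = of_int (digits_value k ds)" and cost: "digits_cost ds \<le> n + nat \<bar>h\<bar> + 2"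
    using assms unfolding tape_invariant_def by blast
  show ?thesis
  proof (cases "h = - int lo")
    case True
    have "length (0 # ds) = Suc lo + hi + 1" and "digits_cost (0 # ds) \<le> Suc n + nat \<bar>h - 1\<bar> + 2"
      using len cost True by simp_all
    moreover have "x * of_nat k ^ Suc lo = of_int (digits_value k (0 # ds))"
      using val by simp
    ultimately show ?thesis
      unfolding tape_invariant_def using h True by (intro exI[of _ "Suc lo"] exI[of _ hi] exI[of _ "0 # ds"]) auto
  next
    case False
    then show ?thesis
      unfolding tape_invariant_def using len h val cost by (intro exI[of _ lo] exI[of _ hi] exI[of _ ds]) auto
  qed
qed

lemma tape_invariant_word:
  assumes "k > 0" and "set w \<subseteq> bs_gens"
  shows "tape_invariant k (length w) (fst (bs_eval k w)) (snd (bs_eval k w))"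
  using assms(2)
proof (induction w rule: rev_induct)
  case Nil
  show ?case using tape_invariant_Nil by simp
next
  case (snoc g w)
  then have IH: "tape_invariant k (length w) (fst (bs_eval k w)) (snd (bs_eval k w))"
    by simp
  have "g \<in> bs_gens"
    using snoc.prems by simp
  then consider "g = (1, 0)" | "g = (- 1, 0)" | "g = (0, 1)" | "g = (0, - 1)"
    unfolding bs_gens_def by blast
  then show ?case
    using tape_invariant_a[OF assms(1) IH, of 1] tape_invariant_a[OF assms(1) IH, of "- 1"]
      tape_invariant_t[OF IH] tape_invariant_t_inv[OF IH]
    by cases (simp_all add: bs_eval_snoc[OF assms(1)] bs_mult_def)
qed

subsection \<open>Counting digit strings of bounded cost\<close>

lemma digits_cost_le_less_2:
  assumes "c < 2"
  shows "{ds. digits_cost ds \<le> c} = {[]}"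
proof -
  have "digits_cost ds \<ge> 2" if "ds \<noteq> []" for ds
    using that by (cases ds) auto
  then show ?thesis
    using assms by fastforce
qed

lemma digits_cost_le_subset:
  "{ds. digits_cost ds \<le> m + 2} \<subseteq>
     insert [] ((\<Union>j\<le>m. (#) (int (m - j)) ` {ds. digits_cost ds \<le> j}) \<union>
                (\<Union>j<m. (#) (- int (m - j)) ` {ds. digits_cost ds \<le> j}))"
  (is "_ \<subseteq> ?U")
proof
  fix ds assume "ds \<in> {ds. digits_cost ds \<le> m + 2}"
  then consider "ds = []" | d es where "ds = d # es" "nat \<bar>d\<bar> + digits_cost es \<le> m"
    by (cases ds) auto
  then show "ds \<in> ?U"
  proof cases
    case (2 d es)
    have es: "es \<in> {ds. digits_cost ds \<le> m - nat \<bar>d\<bar>}"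
      using 2 by simp
    show ?thesis
    proof (cases "d \<ge> 0")
      case True
      then have "d = int (m - (m - nat \<bar>d\<bar>))" "m - nat \<bar>d\<bar> \<le> m"
        using 2 by auto
      then show ?thesis using es 2 by blast
    next
      case False
      then have "d = - int (m - (m - nat \<bar>d\<bar>))" "m - nat \<bar>d\<bar> < m"
        using 2 by auto
      then show ?thesis using es 2 by blast
    qed
  qed simp
qed

lemma finite_digits_cost_le: "finite {ds. digits_cost ds \<le> c}"
proof -
  have "set ds \<subseteq> {- int c..int c} \<and> length ds \<le> c" if "digits_cost ds \<le> c" for ds
    using that by (induction ds arbitrary: c) force+
  then show ?thesis
    by (intro finite_subset[OF _ finite_lists_length_le[OF finite_atLeastAtMost_int]]) auto
qed

lemma geometric_sums_le_power:
  fixes q :: real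
  assumes "1 \<le> q" and "2 \<le> q ^ 2" and "1 + q + q ^ 2 \<le> q ^ 3"
  shows "1 + (\<Sum>j\<le>m. q ^ j) + (\<Sum>j<m. q ^ j) \<le> q ^ (m + 2)"
proof (induction m)
  case 0
  then show ?case using assms(2) by (simp add: power2_eq_square)
next
  case (Suc m)
  have "1 + (\<Sum>j\<le>Suc m. q ^ j) + (\<Sum>j<Suc m. q ^ j)
      = (1 + (\<Sum>j\<le>m. q ^ j) + (\<Sum>j<m. q ^ j)) + q ^ Suc m + q ^ m"
    by simp
  also have "\<dots> \<le> q ^ m * (1 + q + q ^ 2)"
    using Suc by (simp add: algebra_simps power2_eq_square)
  also have "\<dots> \<le> q ^ m * q ^ 3"
    using assms by (simp add: mult_left_mono)
  also have "\<dots> = q ^ (Suc m + 2)"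
    by (simp add: power_add power3_eq_cube)
  finally show ?case .
qed

lemma card_digits_cost_le:
  fixes q :: real
  assumes "1 \<le> q" and "2 \<le> q ^ 2" and "1 + q + q ^ 2 \<le> q ^ 3"
  shows "card {ds. digits_cost ds \<le> c} \<le> q ^ c"
proof (induction c rule: less_induct)
  case (less c)
  show ?case
  proof (cases "c < 2")
    case True
    then show ?thesis
      using assms by (simp add: digits_cost_le_less_2)
  next
    case False
    then obtain m where c: "c = m + 2"
      by (metis add.commute le_Suc_ex not_less)
    let ?D = "\<lambda>j. {ds. digits_cost ds \<le> j}"
    let ?U = "(\<Union>j\<le>m. (#) (int (m - j)) ` ?D j) \<union> (\<Union>j<m. (#) (- int (m - j)) ` ?D j)"
    have IH: "card (?D j) \<le> q ^ j" if "j \<le> m" for j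
      using less that c by auto
    have sub: "?D c \<subseteq> insert [] ?U"
      using digits_cost_le_subset c by simp
    have finite_U: "finite ?U"
      by (simp add: finite_digits_cost_le)
    have "card (?D c) \<le> Suc (card ?U)"
      using card_mono[OF _ sub] finite_U by (simp add: card_insert_if split: if_splits)
    also have "card ?U \<le> (\<Sum>j\<le>m. card (?D j)) + (\<Sum>j<m. card (?D j))"
      by (intro card_Un_le[THEN order_trans] add_mono card_UN_le[THEN order_trans]
          sum_mono card_image_le) (simp_all add: finite_digits_cost_le)
    finally have "card (?D c) \<le> 1 + (\<Sum>j\<le>m. real (card (?D j))) + (\<Sum>j<m. real (card (?D j)))"
      by (simp flip: of_nat_sum)
    also have "\<dots> \<le> 1 + (\<Sum>j\<le>m. q ^ j) + (\<Sum>j<m. q ^ j)"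
      using IH by (intro add_mono sum_mono order.refl) auto
    also have "\<dots> \<le> q ^ c"
      using geometric_sums_le_power[OF assms] c by simp
    finally show ?thesis .
  qed
qed

definition Zk_classes_upto :: "nat \<Rightarrow> nat \<Rightarrow> (rat \<times> int) set set" where
  "Zk_classes_upto k n = {C. (\<exists>x\<in>Zk k. C = conj_class k (x, 0)) \<and> class_length k C \<le> n}"

lemma exists_digits_in_conj_class:
  assumes "k > 0" and "x \<in> Zk k" and "class_length k (conj_class k (x, 0)) \<le> n"
  shows "\<exists>ds. digits_cost ds \<le> n + 2 \<and> (of_int (digits_value k ds), 0) \<in> conj_class k (x, 0)"
proof -
  obtain g where g: "g \<in> conj_class k (x, 0)" and "word_length k g = class_length k (conj_class k (x, 0))"
    using class_length_attained self_in_conj_class[OF assms(1)] by blast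
  then obtain w where w: "set w \<subseteq> bs_gens" "length w \<le> n" "bs_eval k w = g"
    using exists_word_conj_class[OF assms(1,2)] exists_shortest_word assms(3) by metis
  obtain m where "g = (of_nat k powi m * x, 0)"
    using g assms(1) by (auto simp: conj_class_eq)
  then have "tape_invariant k (length w) (of_nat k powi m * x) 0"
    using tape_invariant_word[OF assms(1) w(1)] w(3) by simp
  then obtain lo ds where val: "of_nat k powi m * x * of_nat k ^ lo = of_int (digits_value k ds)"
    and cost: "digits_cost ds \<le> length w + 2"
    unfolding tape_invariant_def by auto
  have "of_int (digits_value k ds) = of_nat k powi (m + int lo) * x"
    using assms(1) val by (simp add: power_int_add mult_ac)
  then have "(of_int (digits_value k ds), 0) \<in> conj_class k (x, 0)"
    unfolding conj_class_eq[OF assms(1)] by (simp only:) (rule rangeI)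
  then show ?thesis
    using cost w(2) by (intro exI[of _ ds]) simp
qed

lemma Zk_classes_upto_subset:
  assumes "k > 0"
  shows "Zk_classes_upto k n \<subseteq>
    (\<lambda>ds. conj_class k (of_int (digits_value k ds), 0)) ` {ds. digits_cost ds \<le> n + 2}"
proof
  fix C assume "C \<in> Zk_classes_upto k n"
  then obtain x where x: "x \<in> Zk k" "C = conj_class k (x, 0)" "class_length k C \<le> n"
    unfolding Zk_classes_upto_def by blast
  then obtain ds where "digits_cost ds \<le> n + 2" "(of_int (digits_value k ds), 0) \<in> C"
    using exists_digits_in_conj_class[OF assms] by blast
  then show "C \<in> (\<lambda>ds. conj_class k (of_int (digits_value k ds), 0)) ` {ds. digits_cost ds \<le> n + 2}"
    using conj_class_eq_if_mem[OF assms] x(2) by auto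
qed

lemma finite_Zk_classes_upto:
  assumes "k > 0"
  shows "finite (Zk_classes_upto k n)"
  using finite_digits_cost_le Zk_classes_upto_subset[OF assms] by (rule finite_surj)

lemma card_Zk_classes_upto_le:
  assumes "k > 0"
  shows "card (Zk_classes_upto k n) \<le> card {ds. digits_cost ds \<le> n + 2}"
  using finite_digits_cost_le Zk_classes_upto_subset[OF assms] by (rule surj_card_le)

lemma digits_value_inj:
  assumes "length ds = length es" and "\<forall>d \<in> set ds \<union> set es. 2 * \<bar>d\<bar> < int k"
    and "digits_value k ds = digits_value k es"
  shows "ds = es"
  using assms
proof (induction ds es rule: list_induct2)
  case (Cons d ds e es)
  then have diff: "d - e = int k * (digits_value k es - digits_value k ds)"
    by (simp add: algebra_simps)
  have "\<bar>d - e\<bar> < int k * 1"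
    using Cons.prems(1) by auto
  moreover have "int k > 0"
    using Cons.prems(1) by fastforce
  ultimately have "\<bar>digits_value k es - digits_value k ds\<bar> < 1"
    unfolding diff abs_mult by (simp add: mult_less_cancel_left)
  then have "digits_value k ds = digits_value k es"
    by simp
  then show ?case
    using Cons diff by simp
qed simp

lemma int_eq_if_conj_class:
  assumes "k > 0" and "(of_int N2, 0) \<in> conj_class k (of_int N1, 0)"
    and "\<not> int k dvd N1" and "\<not> int k dvd N2"
  shows "N1 = N2"
proof -
  have power_eq_0: "j = 0" if "(of_int M2 :: rat) = of_nat k ^ j * of_int M1" "\<not> int k dvd M2" for j M1 M2
  proof -
    have "(of_int M2 :: rat) = of_int (int k ^ j * M1)"
      using that(1) by simp
    then have "M2 = int k ^ j * M1"
      by (simp only: of_int_eq_iff)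
    then show ?thesis
      using that(2) by (cases j) auto
  qed
  obtain m where m: "(of_int N2 :: rat) = of_nat k powi m * of_int N1"
    using assms(1,2) by (auto simp: conj_class_eq)
  show ?thesis
  proof (cases "m \<ge> 0")
    case True
    then have "nat m = 0"
      using m assms(4) by (intro power_eq_0[of N2 _ N1]) (simp add: power_int_def)
    then show ?thesis
      using m True by simp
  next
    case False
    have "(of_int N1 :: rat) = of_nat k powi (- m) * of_int N2"
      using m assms(1) by (simp add: power_int_minus field_simps)
    then have "nat (- m) = 0"
      using False assms(3) by (intro power_eq_0[of N1 _ N2]) (simp add: power_int_def)
    then show ?thesis
      using False by simp
  qed
qed

lemma digits_cost_le_3_length: "set ds \<subseteq> {- 1, 0, 1} \<Longrightarrow> digits_cost ds \<le> 3 * length ds"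
  by (induction ds) auto

lemma card_Zk_classes_upto_ge:
  assumes "k \<ge> 3"
  shows "3 ^ m \<le> card (Zk_classes_upto k (3 * m + 3))"
proof -
  have k: "k > 0"
    using assms by simp
  define ES where "ES = {es. set es \<subseteq> {- 1, 0, 1 :: int} \<and> length es = m}"
  define cls where "cls es = conj_class k (of_int (digits_value k (1 # es)), 0)" for es
  have "cls ` ES \<subseteq> Zk_classes_upto k (3 * m + 3)"
  proof
    fix C assume "C \<in> cls ` ES"
    then obtain es where es: "es \<in> ES" and C: "C = cls es"
      by blast
    have "bs_eval k (horner_word (1 # es)) \<in> C"
      unfolding bs_eval_horner_word[OF k] C cls_def by (rule self_in_conj_class[OF k])
    then have "class_length k C \<le> word_length k (bs_eval k (horner_word (1 # es)))"
      by (rule class_length_le)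
    also have "\<dots> \<le> digits_cost (1 # es)"
      using word_length_le[OF set_horner_word] by (simp only: length_horner_word)
    also have "\<dots> \<le> 3 * m + 3"
      using digits_cost_le_3_length[of es] es by (simp add: ES_def)
    finally show "C \<in> Zk_classes_upto k (3 * m + 3)"
      unfolding Zk_classes_upto_def C cls_def using int_in_Zk by blast
  qed
  moreover have "inj_on cls ES"
  proof (rule inj_onI)
    fix es1 es2 assume es: "es1 \<in> ES" "es2 \<in> ES" and "cls es1 = cls es2"
    then have "(of_int (digits_value k (1 # es2)), 0) \<in> cls es1"
      using self_in_conj_class[OF k] by (simp add: cls_def)
    moreover have "\<not> int k dvd digits_value k (1 # es)" for es
      using assms by (simp add: zdvd_reduce)
    ultimately have "digits_value k (1 # es1) = digits_value k (1 # es2)"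
      unfolding cls_def using int_eq_if_conj_class[OF k] by blast
    then show "es1 = es2"
      using es assms by (intro digits_value_inj[of es1 es2 k]) (auto simp: ES_def)
  qed
  moreover have "card ES = 3 ^ m"
    unfolding ES_def by (subst card_lists_length_eq) (auto simp: numeral_3_eq_3)
  ultimately show ?thesis
    using finite_Zk_classes_upto[OF k] by (metis card_inj_on_le)
qed

lemma c0_le_card_Zk_classes_upto:
  assumes "k > 0"
  shows "c0 k n \<le> card (Zk_classes_upto k n)"
  unfolding c0_def using finite_Zk_classes_upto[OF assms]
  by (rule card_mono) (auto simp: Zk_classes_upto_def)

lemma card_Zk_classes_upto_le_sum_c0: "card (Zk_classes_upto k n) \<le> (\<Sum>i\<le>n. c0 k i)"
proof -
  have "Zk_classes_upto k n =
      (\<Union>i\<le>n. {C. (\<exists>x\<in>Zk k. C = conj_class k (x, 0)) \<and> class_length k C = i})"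
    unfolding Zk_classes_upto_def by auto
  then show ?thesis
    unfolding c0_def by (simp add: card_UN_le)
qed

subsection \<open>Exponential growth rates\<close>

lemma limsup_root_le_of_le_power:
  fixes a :: "nat \<Rightarrow> real"
  assumes "\<And>n. a n \<le> C * q ^ n" and "0 < C" and "0 \<le> q"
  shows "limsup (\<lambda>n. ereal (root n (a n))) \<le> ereal q"
proof -
  have "eventually (\<lambda>n. ereal (root n (a n)) \<le> ereal (root n C * q)) sequentially"
    using eventually_gt_at_top[of 0]
  proof eventually_elim
    case (elim n)
    have "root n (a n) \<le> root n (C * q ^ n)"
      using assms(1) elim by (simp add: real_root_le_iff)
    also have "\<dots> = root n C * q"
      using assms(3) elim by (simp add: real_root_mult real_root_power_cancel)
    finally show ?case
      by simp
  qed
  then have "limsup (\<lambda>n. ereal (root n (a n))) \<le> limsup (\<lambda>n. ereal (root n C * q))"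
    by (rule Limsup_mono)
  also have "\<dots> = ereal q"
  proof (rule lim_imp_Limsup)
    have "(\<lambda>n. root n C * q) \<longlonglongrightarrow> 1 * q"
      by (intro tendsto_mult LIMSEQ_root_const assms(2) tendsto_const)
    then show "(\<lambda>n. ereal (root n C * q)) \<longlonglongrightarrow> ereal q"
      by (simp add: lim_ereal)
  qed simp
  finally show ?thesis .
qed

lemma partial_sums_le_geometric:
  fixes a :: "nat \<Rightarrow> real"
  assumes nonneg: "\<And>n. 0 \<le> a n" and "1 < q" and tail: "\<And>n. n \<ge> N \<Longrightarrow> a n \<le> q ^ n"
  shows "(\<Sum>i\<le>n. a i) \<le> (\<Sum>i<N. a i) + q ^ (n + 1) / (q - 1)"
proof -
  have "a i \<le> (if i < N then a i else 0) + q ^ i" for i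
    using tail[of i] assms(2) by auto
  then have "(\<Sum>i\<le>n. a i) \<le> (\<Sum>i\<le>n. (if i < N then a i else 0)) + (\<Sum>i\<le>n. q ^ i)"
    by (simp add: sum.distrib[symmetric] sum_mono)
  moreover have "(\<Sum>i\<le>n. (if i < N then a i else 0)) \<le> (\<Sum>i<N. a i)"
    unfolding sum.If_cases[OF finite_atMost] using nonneg by (simp add: sum_mono2 lessThan_def)
  moreover have "(\<Sum>i\<le>n. q ^ i) = (1 - q ^ (n + 1)) / (1 - q)"
    using assms(2) unfolding lessThan_Suc_atMost[symmetric] sum_gp_strict by simp
  moreover have "\<dots> = (q ^ (n + 1) - 1) / (q - 1)"
    by (rule minus_divide_divide[of "1 - _" "1 - q", simplified, symmetric])
  moreover have "\<dots> \<le> q ^ (n + 1) / (q - 1)"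
    using assms(2) by (simp add: divide_right_mono)
  ultimately show ?thesis
    by linarith
qed

lemma le_limsup_root_of_partial_sums:
  fixes a :: "nat \<Rightarrow> real"
  assumes nonneg: "\<And>n. 0 \<le> a n" and "1 < q" and "q ^ p < b"
    and partial_sums: "\<And>j. b ^ j \<le> (\<Sum>i\<le>p * j + d. a i)"
  shows "ereal q \<le> limsup (\<lambda>n. ereal (root n (a n)))"
proof (rule ccontr)
  assume "\<not> ?thesis"
  then have "eventually (\<lambda>n. ereal (root n (a n)) < ereal q) sequentially"
    by (intro Limsup_lessD) simp
  then obtain N0 where N0: "\<And>n. n \<ge> N0 \<Longrightarrow> root n (a n) < q"
    by (auto simp: eventually_sequentially)
  have tail: "a n \<le> q ^ n" if "n \<ge> Suc N0" for n
  proof -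
    have "root n (a n) < root n (q ^ n)"
      using N0 that assms(2) by (simp add: real_root_power_cancel)
    then show ?thesis
      using that by simp
  qed
  define A where "A = (\<Sum>i<Suc N0. a i)"
  define K where "K = A + q ^ (d + 1) / (q - 1)"
  have "b ^ j \<le> K * (q ^ p) ^ j" for j
  proof -
    have "0 \<le> A"
      unfolding A_def using nonneg by (simp add: sum_nonneg)
    moreover have "1 \<le> (q ^ p) ^ j"
      using assms(2) by simp
    ultimately have A_le: "A \<le> A * (q ^ p) ^ j"
      by (simp add: mult_le_cancel_left1)
    have pow: "q ^ (p * j + d + 1) = q ^ (d + 1) * (q ^ p) ^ j"
      by (simp add: power_add power_mult)
    have "b ^ j \<le> A + q ^ (p * j + d + 1) / (q - 1)"
      using partial_sums[of j] partial_sums_le_geometric[where N = "Suc N0" and n = "p * j + d", OF nonneg assms(2) tail]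
      unfolding A_def by linarith
    also have "\<dots> \<le> K * (q ^ p) ^ j"
      unfolding K_def distrib_right pow using A_le by simp
    finally show ?thesis .
  qed
  then have "(b / q ^ p) ^ j \<le> K" for j
    using assms(2) by (simp add: power_divide pos_divide_le_eq)
  moreover obtain j where "K < (b / q ^ p) ^ j"
    using real_arch_pow[of "b / q ^ p" K] assms(2,3) by auto
  ultimately show False
    using not_le by blast
qed

theorem corollary3p7:
  fixes r k :: nat
  assumes "r \<ge> 2" and "k = 2 * r"
  shows "ereal (4/3) < limsup (\<lambda>n. ereal (root n (real (c0 k n))))
       \<and> limsup (\<lambda>n. ereal (root n (real (c0 k n)))) < ereal 2"
proof -
  have k: "k \<ge> 3" "k > 0"
    using assms by simp_all
  have "real (c0 k n) \<le> (19/10) ^ 2 * (19/10) ^ n" for n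
  proof -
    have "c0 k n \<le> card {ds. digits_cost ds \<le> n + 2}"
      using c0_le_card_Zk_classes_upto[OF k(2)] card_Zk_classes_upto_le[OF k(2)] by (rule le_trans)
    also have "\<dots> \<le> (19/10 :: real) ^ (n + 2)"
      by (rule card_digits_cost_le) (simp_all add: power2_eq_square power3_eq_cube)
    finally show ?thesis
      by (simp only: power_add mult.commute)
  qed
  then have upper: "limsup (\<lambda>n. ereal (root n (real (c0 k n)))) \<le> ereal (19/10)"
    by (rule limsup_root_le_of_le_power) simp_all
  have "3 ^ j \<le> (\<Sum>i\<le>3 * j + 3. real (c0 k i))" for j
    using card_Zk_classes_upto_ge[OF k(1), of j] card_Zk_classes_upto_le_sum_c0[of k "3 * j + 3"]
    by (simp flip: of_nat_sum)
  then have lower: "ereal (7/5) \<le> limsup (\<lambda>n. ereal (root n (real (c0 k n))))"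
    by (intro le_limsup_root_of_partial_sums[where p = 3 and b = 3 and d = 3]) (simp_all add: power3_eq_cube)
  show ?thesis
    using le_less_trans[OF upper] less_le_trans[OF _ lower] by simp
qed

end
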